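(* Fix an integer $r\ge 2$. For every constant $C>(2^r e r)^{1/(r-1)}$ there is a constant $A>0$ such that the following holds. Let $(H(n))_n$ be a sequence of linear $r$-uniform hypergraphs, $H(n)$ having $n$ vertices and maximum degree $\Delta=\Delta(n)$, and let $k=k(n)$, $\sigma=\sigma(n)$ be integers with $k\le\sigma$, $k\ge A(\log n)^{1/r}$ and $\sigma\ge C\Delta^{1/(r-1)}$. If $L$ is a random $(k,\sigma)$-list assignment for $H(n)$, then $\mathbb{P}[H(n)\text{ is }L\text{-colorable}]\to 1$ as $n\to\infty$.
   Context: A hypergraph is linear if any two distinct vertices lie in at most one common edge. A random $(k,\sigma)$-list assignment $L$ for $H$ is obtained by choosing, for each vertex $v$ independently, the list $L(v)$ uniformly at random among all $k$-element subsets of $\{1,\dots,\sigma\}$. $H$ is $L$-colorable if there is a map $\varphi$ with $\varphi(v)\in L(v)$ for all $v$ such that no edge is monochromatic. $\log$ is the natural logarithm. *)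

theory Defs
  imports "HOL-Probability.Probability"
begin

definition uniform_hypergraph :: "nat \<Rightarrow> 'a set \<Rightarrow> 'a set set \<Rightarrow> bool" where
  "uniform_hypergraph r V E \<longleftrightarrow> finite V \<and> (\<forall>e\<in>E. e \<subseteq> V \<and> card e = r)"

definition linear_hypergraph :: "'a set set \<Rightarrow> bool" where
  "linear_hypergraph E \<longleftrightarrow>
     (\<forall>u v. u \<noteq> v \<longrightarrow> card {e\<in>E. u \<in> e \<and> v \<in> e} \<le> 1)"

definition hdegree :: "'a set set \<Rightarrow> 'a \<Rightarrow> nat" where
  "hdegree E v = card {e\<in>E. v \<in> e}"

text \<open>Maximum degree (0 for the empty vertex set).\<close>
definition max_degree :: "'a set \<Rightarrow> 'a set set \<Rightarrow> nat" where
  "max_degree V E = Max (insert 0 (hdegree E ` V))"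

definition L_colorable :: "'a set \<Rightarrow> 'a set set \<Rightarrow> ('a \<Rightarrow> nat set) \<Rightarrow> bool" where
  "L_colorable V E L \<longleftrightarrow>
     (\<exists>\<phi>. (\<forall>v\<in>V. \<phi> v \<in> L v) \<and> (\<forall>e\<in>E. \<not> (\<exists>c. \<forall>v\<in>e. \<phi> v = c)))"

text \<open>Random (k,sigma)-list assignment: independent uniform k-subsets of {1..sigma}
  for each vertex (value {} outside V).\<close>
definition random_list_assignment :: "'a set \<Rightarrow> nat \<Rightarrow> nat \<Rightarrow> ('a \<Rightarrow> nat set) pmf" where
  "random_list_assignment V k \<sigma> =
     Pi_pmf V {} (\<lambda>v. pmf_of_set {S. S \<subseteq> {1..\<sigma>} \<and> card S = k})"

end

theory Submission
  imports Defs
begin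

(*
  Call a colour c shared by an edge f if c lies in every list L(u), u in f. Colour each
  vertex uniformly from its own list: an edge e is then monochromatic with probability
  |shared colours of e| / k^r, and this event is independent of all events concerning
  edges disjoint from e. Hence, by the Lovasz Local Lemma, L admits a proper colouring
  as soon as, for every edge e, the pairs (f, c) with f meeting e and c shared by f
  number at most k^r / 4. This holds unless some vertex v is overloaded, i.e. at least
  t = k^r div (4 r) + 1 pairs (f, c) have v in f and c shared by f.

  For a random list assignment, t given pairs (f, c) at a vertex v are all present
  only if their colours lie in L(v) and, for every other vertex u of these edges, the
  relevant colours lie in L(u). By linearity two edges through v share no further
  vertex, so this asks for (r - 1) t distinct memberships c in L(u), u other than v,
  which together have probability at most (k / sigma)^((r - 1) t). A union bound over t-sets of pairs bounds the probability that v is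
  overloaded by ((deg v) k choose t) (k / sigma)^((r - 1) t), which is at most q^t
  with q = 4 e r / C^(r - 1) < 1. Since k^r >= A^r log n, this is at most n^(-2)
  for A large, and a union bound over the n vertices completes the proof.
*)

section \<open>The Lovasz Local Lemma\<close>

definition avoid :: "('i \<Rightarrow> 'x set) \<Rightarrow> 'i set \<Rightarrow> 'x set" where
  "avoid B S = {\<omega>. \<forall>j\<in>S. \<omega> \<notin> B j}"

lemma prob_avoid_union_ge:
  fixes M :: "'x pmf" and B :: "'i \<Rightarrow> 'x set"
  assumes "finite U" "T \<inter> U = {}"
    and "\<And>j. j \<in> U \<Longrightarrow> x j \<le> 1"
    and "\<And>S j. T \<subseteq> S \<Longrightarrow> S \<subset> T \<union> U \<Longrightarrow> j \<in> T \<union> U - S \<Longrightarrow>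
      measure_pmf.prob M (B j \<inter> avoid B S) \<le> x j * measure_pmf.prob M (avoid B S)"
  shows "measure_pmf.prob M (avoid B T) * (\<Prod>j\<in>U. 1 - x j) \<le> measure_pmf.prob M (avoid B (T \<union> U))"
  using assms
proof (induction U rule: finite_induct)
  case (insert j U)
  let ?P = "measure_pmf.prob M"
  have IH: "?P (avoid B T) * (\<Prod>j\<in>U. 1 - x j) \<le> ?P (avoid B (T \<union> U))"
  proof (rule insert.IH)
    show "?P (B j' \<inter> avoid B S) \<le> x j' * ?P (avoid B S)"
      if "T \<subseteq> S" "S \<subset> T \<union> U" "j' \<in> T \<union> U - S" for S j'
      using that by (intro insert.prems(3)) auto
  qed (use insert.prems in auto)
  have "?P (B j \<inter> avoid B (T \<union> U)) \<le> x j * ?P (avoid B (T \<union> U))"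
    using insert.hyps insert.prems(1) by (intro insert.prems(3)) auto
  moreover have "avoid B (T \<union> insert j U) = avoid B (T \<union> U) - B j \<inter> avoid B (T \<union> U)"
    by (auto simp: avoid_def)
  then have "?P (avoid B (T \<union> insert j U)) = ?P (avoid B (T \<union> U)) - ?P (B j \<inter> avoid B (T \<union> U))"
    by (simp add: measure_pmf.finite_measure_Diff)
  ultimately have "(1 - x j) * ?P (avoid B (T \<union> U)) \<le> ?P (avoid B (T \<union> insert j U))"
    by (simp add: algebra_simps)
  moreover have "(1 - x j) * (?P (avoid B T) * (\<Prod>j\<in>U. 1 - x j)) \<le> (1 - x j) * ?P (avoid B (T \<union> U))"
    using IH insert.prems(2) by (intro mult_left_mono) auto
  ultimately show ?case
    using insert.hyps by (simp add: algebra_simps)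
qed simp

lemma prod_superset_le:
  fixes f :: "'i \<Rightarrow> real"
  assumes "finite B" "A \<subseteq> B" "\<And>j. j \<in> B \<Longrightarrow> 0 \<le> f j \<and> f j \<le> 1"
  shows "prod f B \<le> prod f A"
proof -
  have "prod f B = prod f (B - A) * prod f A"
    using assms by (simp add: prod.subset_diff)
  also have "\<dots> \<le> 1 * prod f A"
  proof (rule mult_right_mono)
    show "prod f (B - A) \<le> 1"
      using assms by (intro prod_le_1) auto
    show "0 \<le> prod f A"
      using assms by (intro prod_nonneg) auto
  qed
  finally show ?thesis by simp
qed

locale lovasz_local_lemma =
  fixes M :: "'x pmf" and B :: "'i \<Rightarrow> 'x set" and I :: "'i set"
    and N :: "'i \<Rightarrow> 'i set" and x :: "'i \<Rightarrow> real"
  assumes finite_I: "finite I"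
    and N_subset: "\<And>i. i \<in> I \<Longrightarrow> N i \<subseteq> I"
    and independent: "\<And>i S. i \<in> I \<Longrightarrow> S \<subseteq> I - N i - {i} \<Longrightarrow>
      measure_pmf.prob M (B i \<inter> avoid B S) \<le> measure_pmf.prob M (B i) * measure_pmf.prob M (avoid B S)"
    and x_bounds: "\<And>i. i \<in> I \<Longrightarrow> 0 \<le> x i \<and> x i < 1"
    and prob_B_le: "\<And>i. i \<in> I \<Longrightarrow> measure_pmf.prob M (B i) \<le> x i * (\<Prod>j\<in>N i - {i}. 1 - x j)"
begin

abbreviation P :: "'x set \<Rightarrow> real" where
  "P \<equiv> measure_pmf.prob M"

lemma prob_event_avoid_le:
  assumes "S \<subseteq> I" "i \<in> I - S"
  shows "P (B i \<inter> avoid B S) \<le> x i * P (avoid B S)"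
  using assms
proof (induction "card S" arbitrary: S i rule: less_induct)
  case less
  define S1 where "S1 = S \<inter> N i"
  define S2 where "S2 = S - N i"
  have S_eq: "S2 \<union> S1 = S"
    by (auto simp: S1_def S2_def)
  have finite_S: "finite S"
    using less.prems finite_I finite_subset by blast
  have x01: "0 \<le> 1 - x j \<and> 1 - x j \<le> 1" if "j \<in> I" for j
    using x_bounds[OF that] by auto
  have "P (B i \<inter> avoid B S) \<le> P (B i \<inter> avoid B S2)"
    by (rule measure_pmf.finite_measure_mono) (auto simp: avoid_def S2_def)
  also have "\<dots> \<le> P (B i) * P (avoid B S2)"
    using less.prems by (intro independent) (auto simp: S2_def)
  also have "\<dots> \<le> x i * (\<Prod>j\<in>N i - {i}. 1 - x j) * P (avoid B S2)"
    using less.prems by (intro mult_right_mono prob_B_le) auto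
  also have "\<dots> \<le> x i * (\<Prod>j\<in>S1. 1 - x j) * P (avoid B S2)"
    using less.prems N_subset[of i] x_bounds[of i] x01 finite_I
    by (intro mult_right_mono mult_left_mono prod_superset_le)
       (auto simp: S1_def intro: finite_subset)
  also have "\<dots> \<le> x i * P (avoid B (S2 \<union> S1))"
  proof -
    have "P (avoid B S2) * (\<Prod>j\<in>S1. 1 - x j) \<le> P (avoid B (S2 \<union> S1))"
    proof (rule prob_avoid_union_ge)
      fix S' j assume S': "S2 \<subseteq> S'" "S' \<subset> S2 \<union> S1" "j \<in> S2 \<union> S1 - S'"
      then have "card S' < card S"
        using S_eq finite_S by (metis psubset_card_mono)
      then show "P (B j \<inter> avoid B S') \<le> x j * P (avoid B S')"
        using S' S_eq less.prems by (intro less.hyps) auto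
    qed (use finite_S x_bounds less.prems in \<open>auto simp: S1_def S2_def less_imp_le\<close>)
    then have "x i * (P (avoid B S2) * (\<Prod>j\<in>S1. 1 - x j)) \<le> x i * P (avoid B (S2 \<union> S1))"
      using x_bounds[of i] less.prems by (intro mult_left_mono) auto
    then show ?thesis
      by (simp add: ac_simps)
  qed
  finally show ?case
    by (simp only: S_eq)
qed

theorem prob_avoid_ge: "(\<Prod>i\<in>I. 1 - x i) \<le> P (avoid B I)"
proof -
  have "P (avoid B {}) * (\<Prod>i\<in>I. 1 - x i) \<le> P (avoid B ({} \<union> I))"
    using prob_event_avoid_le finite_I x_bounds by (intro prob_avoid_union_ge) (auto simp: less_imp_le)
  moreover have "avoid B {} = space (measure_pmf M)"
    by (simp add: avoid_def)
  ultimately show ?thesis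
    by (simp add: measure_pmf.prob_space)
qed

end

corollary lovasz_local_lemma_sum:
  fixes M :: "'x pmf" and B :: "'i \<Rightarrow> 'x set" and p :: "'i \<Rightarrow> real"
  assumes "finite I" "\<And>i. i \<in> I \<Longrightarrow> N i \<subseteq> I"
    and "\<And>i S. i \<in> I \<Longrightarrow> S \<subseteq> I - N i - {i} \<Longrightarrow>
      measure_pmf.prob M (B i \<inter> avoid B S) \<le> measure_pmf.prob M (B i) * measure_pmf.prob M (avoid B S)"
    and prob_le: "\<And>i. i \<in> I \<Longrightarrow> measure_pmf.prob M (B i) \<le> p i"
    and p_bounds: "\<And>i. i \<in> I \<Longrightarrow> 0 \<le> p i \<and> p i < 1 / 2"
    and sum_le: "\<And>i. i \<in> I \<Longrightarrow> (\<Sum>j\<in>N i - {i}. p j) \<le> 1 / 4"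
  shows "0 < measure_pmf.prob M (avoid B I)"
proof -
  \<comment> \<open>With x i = 2 p i the Weierstrass product inequality bounds the product over
    the neighbours of i below by 1/2.\<close>
  interpret lovasz_local_lemma M B I N "\<lambda>i. 2 * p i"
  proof
    fix i assume i: "i \<in> I"
    have "1 / 2 \<le> 1 - (\<Sum>j\<in>N i - {i}. 2 * p j)"
      using sum_le[OF i] by (simp add: sum_distrib_left[symmetric])
    also have "\<dots> \<le> (\<Prod>j\<in>N i - {i}. 1 - 2 * p j)"
      using assms(2)[OF i] p_bounds by (intro Weierstrass_prod_ineq) force
    finally have "2 * p i * (1 / 2) \<le> 2 * p i * (\<Prod>j\<in>N i - {i}. 1 - 2 * p j)"
      by (rule mult_left_mono) (use p_bounds[OF i] in auto)
    then show "measure_pmf.prob M (B i) \<le> 2 * p i * (\<Prod>j\<in>N i - {i}. 1 - 2 * p j)"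
      using prob_le[OF i] by simp
  qed (use assms in \<open>auto simp: mult.commute\<close>)
  have "0 < (\<Prod>i\<in>I. 1 - 2 * p i)"
    using p_bounds by (intro prod_pos) (simp add: mult.commute)
  with prob_avoid_ge show ?thesis by linarith
qed

section \<open>Colouring from lists by the local lemma\<close>

lemma prob_pair_pmf_Times:
  "measure_pmf.prob (pair_pmf M N) (X \<times> Y) = measure_pmf.prob M X * measure_pmf.prob N Y"
proof -
  have "(X \<times> Y) \<inter> set_pmf (pair_pmf M N) = (X \<inter> set_pmf M) \<times> (Y \<inter> set_pmf N)"
    by (auto simp: set_pair_pmf)
  then have "measure_pmf.prob (pair_pmf M N) (X \<times> Y)
      = measure_pmf.prob (pair_pmf M N) ((X \<inter> set_pmf M) \<times> (Y \<inter> set_pmf N))"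
    by (metis measure_Int_set_pmf)
  also have "\<dots> = measure_pmf.prob M (X \<inter> set_pmf M) * measure_pmf.prob N (Y \<inter> set_pmf N)"
    by (rule measure_pmf_prob_product) (auto intro: countable_subset)
  finally show ?thesis
    by (simp add: measure_Int_set_pmf)
qed

lemma prob_Pi_pmf_Int_eq_mult:
  fixes p :: "'a \<Rightarrow> 'b pmf" and X Y :: "('a \<Rightarrow> 'b) set"
  assumes "finite V" "A \<subseteq> V"
    and X: "\<And>\<phi> \<psi>. (\<forall>v\<in>A. \<phi> v = \<psi> v) \<Longrightarrow> \<phi> \<in> X \<longleftrightarrow> \<psi> \<in> X"
    and Y: "\<And>\<phi> \<psi>. (\<forall>v\<in>V - A. \<phi> v = \<psi> v) \<Longrightarrow> \<phi> \<in> Y \<longleftrightarrow> \<psi> \<in> Y"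
  shows "measure_pmf.prob (Pi_pmf V d p) (X \<inter> Y) =
         measure_pmf.prob (Pi_pmf V d p) X * measure_pmf.prob (Pi_pmf V d p) Y"
proof -
  define glue where "glue = (\<lambda>(\<phi> :: 'a \<Rightarrow> 'b, \<psi>) v. if v \<in> A then \<phi> v else \<psi> v)"
  have "Pi_pmf V d p = Pi_pmf (A \<union> (V - A)) d p"
    using assms(2) by (simp add: Un_absorb1)
  also have "\<dots> = map_pmf glue (pair_pmf (Pi_pmf A d p) (Pi_pmf (V - A) d p))"
    unfolding glue_def using assms(1,2) by (intro Pi_pmf_union) (auto intro: finite_subset)
  finally have Pi_eq: "Pi_pmf V d p = \<dots>" .
  have "glue (\<phi>, \<psi>) \<in> X \<longleftrightarrow> \<phi> \<in> X" for \<phi> \<psi>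
    by (rule X) (simp add: glue_def)
  moreover have "glue (\<phi>, \<psi>) \<in> Y \<longleftrightarrow> \<psi> \<in> Y" for \<phi> \<psi>
    by (rule Y) (simp add: glue_def)
  ultimately have "glue -` (X \<inter> Y) = X \<times> Y" "glue -` X = X \<times> UNIV" "glue -` Y = UNIV \<times> Y"
    by auto
  then show ?thesis
    unfolding Pi_eq measure_map_pmf by (simp add: prob_pair_pmf_Times)
qed

lemma finite_edges: "uniform_hypergraph r V E \<Longrightarrow> finite E"
  unfolding uniform_hypergraph_def by (meson Pow_iff finite_Pow_iff finite_subset subsetI)

definition shared_colour_pairs :: "'a set set \<Rightarrow> ('a \<Rightarrow> 'c set) \<Rightarrow> ('a set \<times> 'c) set" where
  "shared_colour_pairs F L = (SIGMA f:F. \<Inter>v\<in>f. L v)"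

definition monochromatic :: "'a set \<Rightarrow> ('a \<Rightarrow> 'c) set" where
  "monochromatic e = {\<phi>. \<exists>c. \<forall>v\<in>e. \<phi> v = c}"

lemma monochromatic_cong:
  "(\<forall>v\<in>e. \<phi> v = \<psi> v) \<Longrightarrow> \<phi> \<in> monochromatic e \<longleftrightarrow> \<psi> \<in> monochromatic e"
  by (auto simp: monochromatic_def)

lemma prob_monochromatic_le:
  assumes "finite V" "e \<subseteq> V" "e \<noteq> {}"
    and lists: "\<And>v. v \<in> V \<Longrightarrow> finite (L v) \<and> card (L v) = k" "0 < k"
  shows "measure_pmf.prob (Pi_pmf V d (\<lambda>v. pmf_of_set (L v))) (monochromatic e)
         \<le> card (\<Inter>v\<in>e. L v) / real k ^ card e"
proof -
  let ?Q = "Pi_pmf V d (\<lambda>v. pmf_of_set (L v))"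
  let ?colour = "\<lambda>c. {\<phi>. \<forall>v\<in>e. \<phi> v = c}"
  have L_ne: "L v \<noteq> {}" if "v \<in> V" for v
    using lists(1)[OF that] lists(2) by auto
  have finite_shared: "finite (\<Inter>v\<in>e. L v)"
    using assms(2,3) lists(1) by blast
  have "monochromatic e \<inter> set_pmf ?Q \<subseteq> (\<Union>c\<in>(\<Inter>v\<in>e. L v). ?colour c)"
  proof
    fix \<phi> assume \<phi>: "\<phi> \<in> monochromatic e \<inter> set_pmf ?Q"
    then obtain c where c: "\<forall>v\<in>e. \<phi> v = c"
      by (auto simp: monochromatic_def)
    have "\<phi> v \<in> L v" if "v \<in> V" for v
      using \<phi> that L_ne lists(1) assms(1) by (auto simp: set_Pi_pmf PiE_dflt_def)
    then have "c \<in> (\<Inter>v\<in>e. L v)"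
      using c assms(2) by force
    with c show "\<phi> \<in> (\<Union>c\<in>(\<Inter>v\<in>e. L v). ?colour c)"
      by blast
  qed
  then have "measure_pmf.prob ?Q (monochromatic e) \<le> measure_pmf.prob ?Q (\<Union>c\<in>(\<Inter>v\<in>e. L v). ?colour c)"
    unfolding measure_Int_set_pmf[of ?Q "monochromatic e", symmetric]
    by (rule measure_pmf.finite_measure_mono) simp
  also have "\<dots> \<le> (\<Sum>c\<in>(\<Inter>v\<in>e. L v). measure_pmf.prob ?Q (?colour c))"
    using finite_shared by (intro measure_pmf.finite_measure_subadditive_finite) auto
  also have "\<dots> = (\<Sum>c\<in>(\<Inter>v\<in>e. L v). 1 / real k ^ card e)"
  proof (rule sum.cong[OF refl])
    fix c assume c: "c \<in> (\<Inter>v\<in>e. L v)"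
    have "?colour c = Pi V (\<lambda>v. if v \<in> e then {c} else UNIV)"
      using assms(2) by (auto simp: Pi_def)
    then have "measure_pmf.prob ?Q (?colour c)
        = (\<Prod>v\<in>V. measure_pmf.prob (pmf_of_set (L v)) (if v \<in> e then {c} else UNIV))"
      using assms(1) by (simp add: measure_Pi_pmf_Pi)
    also have "\<dots> = (\<Prod>v\<in>V. if v \<in> e then 1 / real k else 1)"
      using c lists L_ne by (intro prod.cong refl) (auto simp: measure_pmf_of_set)
    also have "\<dots> = 1 / real k ^ card e"
      using assms(1,2) by (simp add: prod.If_cases Int_absorb1 power_one_over)
    finally show "measure_pmf.prob ?Q (?colour c) = 1 / real k ^ card e" .
  qed
  finally show ?thesis
    by simp
qed

lemma prob_monochromatic_avoid_disjoint:
  assumes "finite V" "e \<subseteq> V" "\<And>f. f \<in> S \<Longrightarrow> f \<subseteq> V - e"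
  shows "measure_pmf.prob (Pi_pmf V d p) (monochromatic e \<inter> avoid monochromatic S)
         = measure_pmf.prob (Pi_pmf V d p) (monochromatic e)
           * measure_pmf.prob (Pi_pmf V d p) (avoid monochromatic S)"
proof (rule prob_Pi_pmf_Int_eq_mult[OF assms(1,2)])
  show "\<phi> \<in> monochromatic e \<longleftrightarrow> \<psi> \<in> monochromatic e" if "\<forall>v\<in>e. \<phi> v = \<psi> v" for \<phi> \<psi>
    using that by (rule monochromatic_cong)
  show "\<phi> \<in> avoid monochromatic S \<longleftrightarrow> \<psi> \<in> avoid monochromatic S"
    if agree: "\<forall>v\<in>V - e. \<phi> v = \<psi> v" for \<phi> \<psi>
  proof -
    have "\<phi> \<in> monochromatic f \<longleftrightarrow> \<psi> \<in> monochromatic f" if "f \<in> S" for f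
      using that agree assms(3) by (intro monochromatic_cong) blast
    then show ?thesis
      by (simp add: avoid_def)
  qed
qed

lemma L_colorable_if_prob_avoid_monochromatic_pos:
  assumes "finite V" "\<And>v. v \<in> V \<Longrightarrow> finite (L v) \<and> L v \<noteq> {}"
    and "0 < measure_pmf.prob (Pi_pmf V d (\<lambda>v. pmf_of_set (L v))) (avoid monochromatic E)"
  shows "L_colorable V E L"
proof -
  let ?Q = "Pi_pmf V d (\<lambda>v. pmf_of_set (L v))"
  have "set_pmf ?Q \<inter> avoid monochromatic E \<noteq> {}"
    using assms(3) by (simp add: measure_pmf_zero_iff[symmetric])
  then obtain \<phi> where \<phi>: "\<phi> \<in> set_pmf ?Q" "\<phi> \<in> avoid monochromatic E"
    by blast
  have "\<phi> v \<in> L v" if "v \<in> V" for v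
  proof -
    have "\<phi> v \<in> set_pmf (pmf_of_set (L v))"
      using \<phi>(1) that assms(1) by (auto simp: set_Pi_pmf PiE_dflt_def)
    then show ?thesis
      using assms(2)[OF that] by simp
  qed
  with \<phi>(2) show ?thesis
    unfolding L_colorable_def avoid_def monochromatic_def by blast
qed

lemma card_shared_colours_div_power_lt_half:
  assumes "v \<in> e" "finite (L v)" "card (L v) = k" "3 \<le> k" "2 \<le> r"
  shows "card (\<Inter>u\<in>e. L u) / real k ^ r < 1 / 2"
proof -
  have "card (\<Inter>u\<in>e. L u) \<le> k"
    using assms(1-3) card_mono[of "L v" "\<Inter>u\<in>e. L u"] by auto
  then have "card (\<Inter>u\<in>e. L u) / real k ^ r \<le> real k / real k ^ r"
    by (intro divide_right_mono) auto
  also have "\<dots> \<le> real k / (real k * real k)"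
    using assms(4,5) by (intro divide_left_mono) (auto simp: power2_eq_square[symmetric] intro: power_increasing)
  also have "\<dots> < 1 / 2"
    using assms(4) by (simp add: field_simps)
  finally show ?thesis .
qed

lemma L_colorable_by_local_lemma:
  assumes H: "uniform_hypergraph r V E" and "2 \<le> r"
    and lists: "\<And>v. v \<in> V \<Longrightarrow> finite (L v) \<and> card (L v) = k" and "3 \<le> k"
    and few: "\<And>e. e \<in> E \<Longrightarrow>
      real (card (shared_colour_pairs {f\<in>E. f \<noteq> e \<and> f \<inter> e \<noteq> {}} L)) \<le> real k ^ r / 4"
  shows "L_colorable V E L"
proof -
  define Q where "Q = Pi_pmf V undefined (\<lambda>v. pmf_of_set (L v))"
  define N where "N e = {f\<in>E. f \<noteq> e \<and> f \<inter> e \<noteq> {}}" for e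
  define p where "p e = card (\<Inter>v\<in>e. L v) / real k ^ r" for e
  have V: "finite V" and edges: "\<And>e. e \<in> E \<Longrightarrow> e \<subseteq> V \<and> card e = r"
    using H by (auto simp: uniform_hypergraph_def)
  have "finite E"
    using H by (rule finite_edges)
  have edge_ne: "e \<noteq> {}" if "e \<in> E" for e
    using edges[OF that] \<open>2 \<le> r\<close> by auto
  have finite_shared: "finite (\<Inter>v\<in>e. L v)" if "e \<in> E" for e
    using edge_ne[OF that] edges[OF that] lists by blast
  have p_bounds: "0 \<le> p e \<and> p e < 1 / 2" if e: "e \<in> E" for e
  proof -
    obtain v where "v \<in> e"
      using edge_ne[OF e] by auto
    then show ?thesis
      unfolding p_def using lists edges[OF e] \<open>2 \<le> r\<close> \<open>3 \<le> k\<close>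
      by (intro conjI card_shared_colours_div_power_lt_half) auto
  qed
  have "0 < measure_pmf.prob Q (avoid monochromatic E)"
  proof (rule lovasz_local_lemma_sum[where N = N and p = p])
    fix e S assume e: "e \<in> E" and S: "S \<subseteq> E - N e - {e}"
    have "f \<subseteq> V - e" if "f \<in> S" for f
      using that S edges by (auto simp: N_def)
    then show "measure_pmf.prob Q (monochromatic e \<inter> avoid monochromatic S)
        \<le> measure_pmf.prob Q (monochromatic e) * measure_pmf.prob Q (avoid monochromatic S)"
      unfolding Q_def using edges[OF e] by (simp add: prob_monochromatic_avoid_disjoint[OF V])
  next
    fix e assume e: "e \<in> E"
    have "measure_pmf.prob Q (monochromatic e) \<le> card (\<Inter>v\<in>e. L v) / real k ^ card e"
      unfolding Q_def using edges[OF e] edge_ne[OF e] lists \<open>3 \<le> k\<close>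
      by (intro prob_monochromatic_le[OF V]) auto
    then show "measure_pmf.prob Q (monochromatic e) \<le> p e"
      using edges[OF e] by (simp add: p_def)
    have "(\<Sum>f\<in>N e - {e}. p f) = real (\<Sum>f\<in>N e. card (\<Inter>v\<in>f. L v)) / real k ^ r"
      by (simp add: p_def N_def sum_divide_distrib)
    also have "(\<Sum>f\<in>N e. card (\<Inter>v\<in>f. L v)) = card (shared_colour_pairs (N e) L)"
      unfolding shared_colour_pairs_def using \<open>finite E\<close> finite_shared
      by (intro card_SigmaI[symmetric]) (auto simp: N_def)
    also have "real \<dots> / real k ^ r \<le> (real k ^ r / 4) / real k ^ r"
      using few[OF e] by (intro divide_right_mono) (auto simp: N_def)
    finally show "(\<Sum>f\<in>N e - {e}. p f) \<le> 1 / 4"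
      using \<open>3 \<le> k\<close> by simp
  qed (use \<open>finite E\<close> p_bounds in \<open>auto simp: N_def\<close>)
  moreover have "finite (L v) \<and> L v \<noteq> {}" if "v \<in> V" for v
    using lists[OF that] \<open>3 \<le> k\<close> by auto
  ultimately show ?thesis
    unfolding Q_def using V by (intro L_colorable_if_prob_avoid_monochromatic_pos)
qed

section \<open>Random k-subsets\<close>

definition k_subsets :: "'a set \<Rightarrow> nat \<Rightarrow> 'a set set" where
  "k_subsets A k = {X. X \<subseteq> A \<and> card X = k}"

lemma finite_k_subsets: "finite A \<Longrightarrow> finite (k_subsets A k)"
  unfolding k_subsets_def by simp

lemma card_k_subsets: "finite A \<Longrightarrow> card (k_subsets A k) = card A choose k"
  unfolding k_subsets_def by (rule n_subsets)

lemma k_subsets_nonempty: "finite A \<Longrightarrow> k \<le> card A \<Longrightarrow> k_subsets A k \<noteq> {}"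
  using card_k_subsets[of A k] by auto

lemma choose_times_power_le:
  assumes "s \<le> k" "k \<le> n"
  shows "real (k choose s) * real n ^ s \<le> real (n choose s) * real k ^ s"
proof -
  have "real (k choose s) * real n ^ s = (\<Prod>i = 0..<s. real (k - i) / real (s - i) * real n)"
    unfolding binomial_altdef_of_nat[OF assms(1)] prod.distrib by simp
  also have "\<dots> \<le> (\<Prod>i = 0..<s. real (n - i) / real (s - i) * real k)"
  proof (rule prod_mono)
    fix i assume "i \<in> {0..<s}"
    then have "real (k - i) * real n \<le> real (n - i) * real k"
      using assms by (simp add: of_nat_diff algebra_simps mult_left_mono)
    then show "0 \<le> real (k - i) / real (s - i) * real n \<and>
        real (k - i) / real (s - i) * real n \<le> real (n - i) / real (s - i) * real k"
      by (auto simp: divide_simps mult.commute mult.left_commute)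
  qed
  also have "\<dots> = real (n choose s) * real k ^ s"
    using assms unfolding binomial_altdef_of_nat[of s n, OF le_trans[OF assms]] prod.distrib by simp
  finally show ?thesis .
qed

lemma card_supersets_in_k_subsets:
  assumes "finite A" "S \<subseteq> A" "card S \<le> k"
  shows "card {X\<in>k_subsets A k. S \<subseteq> X} = (card A - card S) choose (k - card S)"
proof -
  have "finite S"
    using assms finite_subset by blast
  have "bij_betw (\<lambda>X. X - S) {X\<in>k_subsets A k. S \<subseteq> X} (k_subsets (A - S) (k - card S))"
  proof (rule bij_betwI[where g = "\<lambda>Y. Y \<union> S"])
    show "(\<lambda>Y. Y \<union> S) \<in> k_subsets (A - S) (k - card S) \<rightarrow> {X\<in>k_subsets A k. S \<subseteq> X}"
    proof
      fix Y assume Y: "Y \<in> k_subsets (A - S) (k - card S)"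
      then have "finite Y"
        using assms(1) finite_subset by (auto simp: k_subsets_def)
      then have "card (Y \<union> S) = k"
        using Y \<open>finite S\<close> assms(3) by (subst card_Un_disjoint) (auto simp: k_subsets_def)
      then show "Y \<union> S \<in> {X\<in>k_subsets A k. S \<subseteq> X}"
        using Y assms(2) by (auto simp: k_subsets_def)
    qed
  qed (use assms \<open>finite S\<close> in \<open>auto simp: k_subsets_def card_Diff_subset\<close>)
  then have "card {X\<in>k_subsets A k. S \<subseteq> X} = card (k_subsets (A - S) (k - card S))"
    by (rule bij_betw_same_card)
  also have "\<dots> = card (A - S) choose (k - card S)"
    using assms(1) by (simp add: card_k_subsets)
  finally show ?thesis
    using assms \<open>finite S\<close> by (simp add: card_Diff_subset)
qed

lemma prob_subset_random_k_subset:
  assumes "finite A" "S \<subseteq> A" "k \<le> card A"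
  shows "measure_pmf.prob (pmf_of_set (k_subsets A k)) {X. S \<subseteq> X}
         \<le> (real k / real (card A)) ^ card S"
proof -
  let ?s = "card S"
  have "k_subsets A k \<inter> {X. S \<subseteq> X} = {X\<in>k_subsets A k. S \<subseteq> X}"
    by blast
  then have prob: "measure_pmf.prob (pmf_of_set (k_subsets A k)) {X. S \<subseteq> X}
      = real (card {X\<in>k_subsets A k. S \<subseteq> X}) / real (card A choose k)"
    using assms by (simp add: measure_pmf_of_set finite_k_subsets card_k_subsets k_subsets_nonempty)
  show ?thesis
  proof (cases "?s \<le> k")
    case False
    then have "{X\<in>k_subsets A k. S \<subseteq> X} = {}"
      using assms(1) by (auto simp: k_subsets_def dest: card_mono[OF finite_subset])
    then have "card {X\<in>k_subsets A k. S \<subseteq> X} = 0"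
      by (simp only: card.empty)
    then show ?thesis
      using prob by simp
  next
    case True
    have "real (card A choose k) * real (k choose ?s)
        = real (card A choose ?s) * real ((card A - ?s) choose (k - ?s))"
      using choose_mult[OF True assms(3)] by (metis of_nat_mult)
    moreover have "0 < real (card A choose k)" "0 < real (card A choose ?s)"
      using True assms(3) by auto
    ultimately have "real ((card A - ?s) choose (k - ?s)) / real (card A choose k)
        = real (k choose ?s) / real (card A choose ?s)"
      by (simp add: field_simps)
    also have "\<dots> \<le> (real k / real (card A)) ^ ?s"
      using choose_times_power_le[OF True assms(3)] \<open>0 < real (card A choose ?s)\<close> True assms(3)
      by (cases "card A = 0") (simp_all add: field_simps power_divide)
    finally show ?thesis
      using prob card_supersets_in_k_subsets[OF assms(1,2) True] by simp
  qed
qed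

lemma power_div_fact_le_exp:
  fixes x :: real
  assumes "0 \<le> x"
  shows "x ^ n / fact n \<le> exp x"
proof -
  have "summable (\<lambda>i. x ^ i /\<^sub>R fact i)"
    using exp_converges sums_summable by blast
  then have "(\<Sum>i\<in>{n}. x ^ i /\<^sub>R fact i) \<le> (\<Sum>i. x ^ i /\<^sub>R fact i)"
    by (rule sum_le_suminf) (use assms in auto)
  also have "\<dots> = exp x"
    using exp_converges sums_unique by metis
  finally show ?thesis
    by (simp add: divide_inverse_commute)
qed

lemma choose_le_exp_power:
  assumes "0 < t"
  shows "real (N choose t) \<le> (exp 1 * real N / real t) ^ t"
proof -
  have "real (N choose t) * fact t \<le> real N ^ t"
    using binomial_fact_pow[of N t] by (metis of_nat_fact of_nat_le_iff of_nat_mult of_nat_power)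
  then have "real (N choose t) \<le> real N ^ t / fact t"
    by (simp add: field_simps)
  also have "\<dots> \<le> real N ^ t * (exp (real t) / real t ^ t)"
  proof -
    have "real t ^ t / fact t \<le> exp (real t)"
      by (rule power_div_fact_le_exp) simp
    then have "1 / fact t \<le> exp (real t) / real t ^ t"
      using assms by (simp add: field_simps)
    then show ?thesis
      by (metis mult_left_mono times_divide_eq_right mult_1_right zero_le_power of_nat_0_le_iff)
  qed
  also have "\<dots> = (exp 1 * real N / real t) ^ t"
    by (simp add: power_divide power_mult_distrib exp_of_nat_mult[symmetric])
  finally show ?thesis .
qed

section \<open>Vertices in many shared colour pairs\<close>

lemma prob_card_ge_le_sum_subsets:
  fixes M :: "'x pmf" and X :: "'x \<Rightarrow> 'b set"
  assumes "finite U" "\<And>\<omega>. \<omega> \<in> set_pmf M \<Longrightarrow> X \<omega> \<subseteq> U"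
  shows "measure_pmf.prob M {\<omega>. t \<le> card (X \<omega>)}
         \<le> (\<Sum>W\<in>k_subsets U t. measure_pmf.prob M {\<omega>. W \<subseteq> X \<omega>})"
proof -
  have "{\<omega>. t \<le> card (X \<omega>)} \<inter> set_pmf M \<subseteq> (\<Union>W\<in>k_subsets U t. {\<omega>. W \<subseteq> X \<omega>})"
  proof
    fix \<omega> assume \<omega>: "\<omega> \<in> {\<omega>. t \<le> card (X \<omega>)} \<inter> set_pmf M"
    then obtain W where "W \<subseteq> X \<omega>" "card W = t"
      by (auto elim: obtain_subset_with_card_n)
    with \<omega> assms(2) show "\<omega> \<in> (\<Union>W\<in>k_subsets U t. {\<omega>. W \<subseteq> X \<omega>})"
      by (auto simp: k_subsets_def)
  qed
  then have "measure_pmf.prob M {\<omega>. t \<le> card (X \<omega>)}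
      \<le> measure_pmf.prob M (\<Union>W\<in>k_subsets U t. {\<omega>. W \<subseteq> X \<omega>})"
    unfolding measure_Int_set_pmf[of M "{\<omega>. t \<le> card (X \<omega>)}", symmetric]
    by (rule measure_pmf.finite_measure_mono) simp
  also have "\<dots> \<le> (\<Sum>W\<in>k_subsets U t. measure_pmf.prob M {\<omega>. W \<subseteq> X \<omega>})"
    using assms(1) by (intro measure_pmf.finite_measure_subadditive_finite) (auto simp: k_subsets_def)
  finally show ?thesis .
qed

lemma card_other_vertex_colours:
  fixes W :: "('a set \<times> 'b) set"
  assumes H: "uniform_hypergraph r V E" and "linear_hypergraph E"
    and W: "W \<subseteq> {f\<in>E. v \<in> f} \<times> UNIV" "finite W"
  shows "card {(u, c). u \<noteq> v \<and> (\<exists>f. (f, c) \<in> W \<and> u \<in> f)} = (r - 1) * card W"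
proof -
  define Z where "Z = (SIGMA w:W. fst w - {v})"
  define g where "g = (\<lambda>((f :: 'a set, c :: 'b), u :: 'a). (u, c))"
  have edges: "\<And>f. f \<in> E \<Longrightarrow> finite f \<and> card f = r"
    using H by (auto simp: uniform_hypergraph_def intro: finite_subset)
  \<comment> \<open>Linearity: an edge through v is determined by any second vertex u.\<close>
  have "inj_on g Z"
  proof (rule inj_onI)
    fix a b assume ab: "a \<in> Z" "b \<in> Z" "g a = g b"
    obtain f c u f' c' u' where a: "a = ((f, c), u)" and b: "b = ((f', c'), u')"
      by (metis prod.collapse)
    then have "c' = c" "u' = u"
      using ab(3) by (auto simp: g_def)
    then have "(f, c) \<in> W" "(f', c) \<in> W" "u \<in> f" "u \<in> f'" "u \<noteq> v"
      using ab(1,2) a b by (auto simp: Z_def)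
    then have "f \<in> {e\<in>E. u \<in> e \<and> v \<in> e}" "f' \<in> {e\<in>E. u \<in> e \<and> v \<in> e}"
      using W by auto
    moreover have "card {e\<in>E. u \<in> e \<and> v \<in> e} \<le> 1"
      using \<open>linear_hypergraph E\<close> \<open>u \<noteq> v\<close> by (auto simp: linear_hypergraph_def)
    moreover have "finite {e\<in>E. u \<in> e \<and> v \<in> e}"
      using finite_edges[OF H] by auto
    ultimately have "f = f'"
      by (auto simp: card_le_Suc0_iff_eq)
    then show "a = b"
      using a b \<open>c' = c\<close> \<open>u' = u\<close> by simp
  qed
  moreover have "g ` Z = {(u, c). u \<noteq> v \<and> (\<exists>f. (f, c) \<in> W \<and> u \<in> f)}"
    by (force simp: Z_def g_def)
  ultimately have "card {(u, c). u \<noteq> v \<and> (\<exists>f. (f, c) \<in> W \<and> u \<in> f)} = card Z"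
    by (metis card_image)
  also have "\<dots> = (\<Sum>w\<in>W. card (fst w - {v}))"
    unfolding Z_def using W edges by (intro card_SigmaI) auto
  also have "\<dots> = (\<Sum>w\<in>W. r - 1)"
    using W edges by (intro sum.cong refl) (auto simp: card_Diff_singleton)
  finally show ?thesis
    by simp
qed

lemma prob_shared_colour_pairs_superset_le:
  assumes H: "uniform_hypergraph r V E" and "linear_hypergraph E" "v \<in> V"
    and A: "finite A" "k \<le> card A" and W: "W \<subseteq> {f\<in>E. v \<in> f} \<times> A"
  shows "measure_pmf.prob (Pi_pmf V d (\<lambda>_. pmf_of_set (k_subsets A k)))
           {L. W \<subseteq> shared_colour_pairs {f\<in>E. v \<in> f} L}
         \<le> measure_pmf.prob (pmf_of_set (k_subsets A k)) {X. snd ` W \<subseteq> X}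
           * (real k / real (card A)) ^ ((r - 1) * card W)"
proof -
  let ?p = "\<lambda>S. measure_pmf.prob (pmf_of_set (k_subsets A k)) {X. S \<subseteq> X}"
  define colours where "colours u = {c. \<exists>f. (f, c) \<in> W \<and> u \<in> f}" for u
  have V: "finite V" and edges: "\<And>f. f \<in> E \<Longrightarrow> f \<subseteq> V"
    using H by (auto simp: uniform_hypergraph_def)
  have colours_sub: "colours u \<subseteq> A" for u
    using W by (auto simp: colours_def)
  have finite_colours: "finite (colours u)" for u
    using colours_sub A(1) by (rule finite_subset)
  have "finite W"
    using finite_subset[OF W] finite_edges[OF H] A(1) by simp
  have "W \<subseteq> shared_colour_pairs {f\<in>E. v \<in> f} L \<longleftrightarrow> (\<forall>u\<in>V. colours u \<subseteq> L u)" for L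
    using W edges unfolding shared_colour_pairs_def colours_def by blast
  then have "{L. W \<subseteq> shared_colour_pairs {f\<in>E. v \<in> f} L} = Pi V (\<lambda>u. {X. colours u \<subseteq> X})"
    by (auto simp: Pi_def)
  then have "measure_pmf.prob (Pi_pmf V d (\<lambda>_. pmf_of_set (k_subsets A k)))
      {L. W \<subseteq> shared_colour_pairs {f\<in>E. v \<in> f} L} = (\<Prod>u\<in>V. ?p (colours u))"
    by (simp add: measure_Pi_pmf_Pi[OF V])
  also have "\<dots> = ?p (colours v) * (\<Prod>u\<in>V - {v}. ?p (colours u))"
    using V \<open>v \<in> V\<close> by (simp add: prod.remove)
  also have "\<dots> \<le> ?p (colours v) * (\<Prod>u\<in>V - {v}. (real k / real (card A)) ^ card (colours u))"
    using A colours_sub by (intro mult_left_mono prod_mono) (auto intro: prob_subset_random_k_subset)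
  also have "(\<Prod>u\<in>V - {v}. (real k / real (card A)) ^ card (colours u))
      = (real k / real (card A)) ^ (\<Sum>u\<in>V - {v}. card (colours u))"
    by (simp add: power_sum)
  also have "(\<Sum>u\<in>V - {v}. card (colours u)) = card (SIGMA u:V - {v}. colours u)"
    using V finite_colours by (intro card_SigmaI[symmetric]) auto
  also have "(SIGMA u:V - {v}. colours u) = {(u, c). u \<noteq> v \<and> (\<exists>f. (f, c) \<in> W \<and> u \<in> f)}"
    using W edges by (auto simp: colours_def)
  also have "card \<dots> = (r - 1) * card W"
    using W \<open>finite W\<close> by (intro card_other_vertex_colours[OF H \<open>linear_hypergraph E\<close>]) auto
  also have "colours v = snd ` W"
    using W by (force simp: colours_def)
  finally show ?thesis .
qed

lemma sum_prob_snd_image_subset: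
  assumes "finite F" "finite A" "k \<le> card A"
  shows "(\<Sum>W\<in>k_subsets (F \<times> A) t. measure_pmf.prob (pmf_of_set (k_subsets A k)) {X. snd ` W \<subseteq> X})
         = real ((card F * k) choose t)"
proof -
  let ?K = "k_subsets A k"
  have K: "finite ?K" "?K \<noteq> {}"
    using assms(2,3) by (auto simp: finite_k_subsets k_subsets_nonempty)
  have fin: "finite (k_subsets (F \<times> A) t)"
    using assms(1,2) by (simp add: finite_k_subsets)
  have "(\<Sum>W\<in>k_subsets (F \<times> A) t. measure_pmf.prob (pmf_of_set ?K) {X. snd ` W \<subseteq> X})
      = (\<Sum>W\<in>k_subsets (F \<times> A) t. \<Sum>X\<in>?K. of_bool (snd ` W \<subseteq> X)) / real (card ?K)"
    using K by (simp add: measure_pmf_of_set sum_divide_distrib Int_def conj_commute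
        flip: sum.inter_filter)
  also have "\<dots> = (\<Sum>X\<in>?K. \<Sum>W\<in>k_subsets (F \<times> A) t. of_bool (snd ` W \<subseteq> X)) / real (card ?K)"
    by (subst sum.swap) rule
  \<comment> \<open>Double counting: a k-set X contains snd ` W exactly for the t-subsets W of F \<times> X.\<close>
  also have "\<dots> = (\<Sum>X\<in>?K. real ((card F * k) choose t)) / real (card ?K)"
  proof (intro arg_cong2[where f = "(/)"] sum.cong refl)
    fix X assume X: "X \<in> ?K"
    then have "finite X" "card X = k"
      using assms(2) by (auto simp: k_subsets_def intro: finite_subset)
    have "k_subsets (F \<times> A) t \<inter> {W. snd ` W \<subseteq> X} = k_subsets (F \<times> X) t"
      using X by (auto simp: k_subsets_def)
    then have "(\<Sum>W\<in>k_subsets (F \<times> A) t. of_bool (snd ` W \<subseteq> X)) = real (card (k_subsets (F \<times> X) t))"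
      using fin by (simp flip: sum.inter_filter)
    also have "\<dots> = real ((card F * k) choose t)"
      using assms(1) \<open>finite X\<close> \<open>card X = k\<close> by (simp add: card_k_subsets card_cartesian_product)
    finally show "(\<Sum>W\<in>k_subsets (F \<times> A) t. of_bool (snd ` W \<subseteq> X)) = real ((card F * k) choose t)" .
  qed
  also have "\<dots> = real ((card F * k) choose t)"
    using K by simp
  finally show ?thesis .
qed

lemma random_lists_in_k_subsets:
  assumes "finite V" "finite A" "k \<le> card A" "v \<in> V"
    and "L \<in> set_pmf (Pi_pmf V d (\<lambda>_. pmf_of_set (k_subsets A k)))"
  shows "L v \<subseteq> A \<and> finite (L v) \<and> card (L v) = k"
proof -
  have "L v \<in> k_subsets A k"
    using assms k_subsets_nonempty[OF assms(2,3)] finite_k_subsets[OF assms(2)]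
    by (auto simp: set_Pi_pmf PiE_dflt_def)
  then show ?thesis
    using assms(2) by (auto simp: k_subsets_def intro: finite_subset)
qed

lemma prob_many_shared_colours_le:
  assumes H: "uniform_hypergraph r V E" and "linear_hypergraph E" "0 < r" "v \<in> V"
    and A: "finite A" "k \<le> card A"
  shows "measure_pmf.prob (Pi_pmf V d (\<lambda>_. pmf_of_set (k_subsets A k)))
           {L. t \<le> card (shared_colour_pairs {f\<in>E. v \<in> f} L)}
         \<le> real ((hdegree E v * k) choose t) * (real k / real (card A)) ^ ((r - 1) * t)"
proof -
  let ?M = "Pi_pmf V d (\<lambda>_. pmf_of_set (k_subsets A k))"
  let ?p = "\<lambda>S. measure_pmf.prob (pmf_of_set (k_subsets A k)) {X. S \<subseteq> X}"
  define F where "F = {f\<in>E. v \<in> f}"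
  have V: "finite V" and edges: "\<And>f. f \<in> E \<Longrightarrow> f \<subseteq> V \<and> card f = r"
    using H by (auto simp: uniform_hypergraph_def)
  have "finite F"
    using finite_edges[OF H] by (simp add: F_def)
  have "shared_colour_pairs F L \<subseteq> F \<times> A" if "L \<in> set_pmf ?M" for L
  proof
    fix p assume p: "p \<in> shared_colour_pairs F L"
    then obtain f c where "p = (f, c)" "f \<in> F" "c \<in> (\<Inter>u\<in>f. L u)"
      by (auto simp: shared_colour_pairs_def)
    moreover obtain u where "u \<in> f"
      using edges \<open>0 < r\<close> \<open>f \<in> F\<close> by (fastforce simp: F_def)
    moreover have "u \<in> V"
      using edges \<open>f \<in> F\<close> \<open>u \<in> f\<close> by (auto simp: F_def)
    ultimately show "p \<in> F \<times> A"
      using random_lists_in_k_subsets[OF V A \<open>u \<in> V\<close> that] by auto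
  qed
  then have "measure_pmf.prob ?M {L. t \<le> card (shared_colour_pairs F L)}
      \<le> (\<Sum>W\<in>k_subsets (F \<times> A) t. measure_pmf.prob ?M {L. W \<subseteq> shared_colour_pairs F L})"
    using \<open>finite F\<close> A by (intro prob_card_ge_le_sum_subsets) auto
  also have "\<dots> \<le> (\<Sum>W\<in>k_subsets (F \<times> A) t. ?p (snd ` W) * (real k / real (card A)) ^ ((r - 1) * t))"
    using prob_shared_colour_pairs_superset_le[OF H \<open>linear_hypergraph E\<close> \<open>v \<in> V\<close> A]
    by (intro sum_mono) (auto simp: k_subsets_def F_def)
  also have "\<dots> = real ((card F * k) choose t) * (real k / real (card A)) ^ ((r - 1) * t)"
    using sum_prob_snd_image_subset[OF \<open>finite F\<close> A] by (simp flip: sum_distrib_right)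
  finally show ?thesis
    by (simp add: F_def hdegree_def)
qed

lemma prob_vertex_overloaded_le:
  assumes H: "uniform_hypergraph r V E" and "linear_hypergraph E" "0 < r" "v \<in> V"
    and "0 < k" "k \<le> \<sigma>" "0 < t" "real k ^ r \<le> 4 * real r * real t"
    and "4 * exp 1 * real r * real (hdegree E v) \<le> q * real \<sigma> ^ (r - 1)"
  shows "measure_pmf.prob (random_list_assignment V k \<sigma>)
           {L. t \<le> card (shared_colour_pairs {f\<in>E. v \<in> f} L)} \<le> q ^ t"
proof -
  let ?d = "real (hdegree E v)"
  have "0 < \<sigma>"
    using assms by simp
  have "measure_pmf.prob (random_list_assignment V k \<sigma>)
           {L. t \<le> card (shared_colour_pairs {f\<in>E. v \<in> f} L)}
        \<le> real ((hdegree E v * k) choose t) * (real k / real \<sigma>) ^ ((r - 1) * t)"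
    using prob_many_shared_colours_le[OF H assms(2-4), of "{1..\<sigma>}" k] assms
    by (simp add: random_list_assignment_def k_subsets_def)
  also have "\<dots> \<le> (exp 1 * real (hdegree E v * k) / real t) ^ t * (real k / real \<sigma>) ^ ((r - 1) * t)"
    using \<open>0 < t\<close> by (intro mult_right_mono choose_le_exp_power) auto
  also have "\<dots> = (exp 1 * real (hdegree E v * k) / real t * (real k / real \<sigma>) ^ (r - 1)) ^ t"
    by (simp only: power_mult power_mult_distrib)
  also have "\<dots> = (exp 1 * ?d * real k ^ r / (real t * real \<sigma> ^ (r - 1))) ^ t"
  proof -
    have "real k * real k ^ (r - 1) = real k ^ r"
      using \<open>0 < r\<close> by (simp flip: power_Suc)
    then have "exp 1 * real (hdegree E v * k) / real t * (real k / real \<sigma>) ^ (r - 1)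
        = exp 1 * ?d * real k ^ r / (real t * real \<sigma> ^ (r - 1))"
      by (simp add: power_divide field_simps)
    then show ?thesis
      by simp
  qed
  also have "\<dots> \<le> q ^ t"
  proof (rule power_mono)
    have "exp 1 * ?d * real k ^ r \<le> exp 1 * ?d * (4 * real r * real t)"
      using assms by (intro mult_left_mono) auto
    also have "\<dots> \<le> q * real \<sigma> ^ (r - 1) * real t"
      using assms by (simp add: algebra_simps mult_right_mono)
    finally show "exp 1 * ?d * real k ^ r / (real t * real \<sigma> ^ (r - 1)) \<le> q"
      using \<open>0 < t\<close> \<open>0 < \<sigma>\<close> by (simp add: field_simps)
  qed simp
  finally show ?thesis .
qed

lemma prob_some_vertex_overloaded_le:
  assumes H: "uniform_hypergraph r V E" and lin: "linear_hypergraph E" and "0 < r"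
    and "0 < k" "k \<le> \<sigma>" "0 < t" "real k ^ r \<le> 4 * real r * real t"
    and degree: "4 * exp 1 * real r * real (max_degree V E) \<le> q * real \<sigma> ^ (r - 1)"
  shows "measure_pmf.prob (random_list_assignment V k \<sigma>)
           (\<Union>v\<in>V. {L. t \<le> card (shared_colour_pairs {f\<in>E. v \<in> f} L)}) \<le> real (card V) * q ^ t"
proof -
  let ?M = "random_list_assignment V k \<sigma>"
  have V: "finite V"
    using H by (simp add: uniform_hypergraph_def)
  have "measure_pmf.prob ?M (\<Union>v\<in>V. {L. t \<le> card (shared_colour_pairs {f\<in>E. v \<in> f} L)})
      \<le> (\<Sum>v\<in>V. measure_pmf.prob ?M {L. t \<le> card (shared_colour_pairs {f\<in>E. v \<in> f} L)})"
    using V by (intro measure_pmf.finite_measure_subadditive_finite) auto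
  also have "\<dots> \<le> (\<Sum>v\<in>V. q ^ t)"
  proof (rule sum_mono)
    fix v assume "v \<in> V"
    then have "hdegree E v \<le> max_degree V E"
      using V by (auto simp: max_degree_def)
    then have "4 * exp 1 * real r * real (hdegree E v) \<le> 4 * exp 1 * real r * real (max_degree V E)"
      by (intro mult_left_mono) auto
    with degree have "4 * exp 1 * real r * real (hdegree E v) \<le> q * real \<sigma> ^ (r - 1)"
      by linarith
    then show "measure_pmf.prob ?M {L. t \<le> card (shared_colour_pairs {f\<in>E. v \<in> f} L)} \<le> q ^ t"
      using assms \<open>v \<in> V\<close> by (intro prob_vertex_overloaded_le[OF H lin]) auto
  qed
  finally show ?thesis
    by simp
qed

lemma L_colorable_if_few_shared_colours:
  assumes H: "uniform_hypergraph r V E" and "2 \<le> r"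
    and lists: "\<And>v. v \<in> V \<Longrightarrow> finite (L v) \<and> card (L v) = k" and "3 \<le> k"
    and few: "\<And>v. v \<in> V \<Longrightarrow>
      real r * real (card (shared_colour_pairs {f\<in>E. v \<in> f} L)) \<le> real k ^ r / 4"
  shows "L_colorable V E L"
proof (rule L_colorable_by_local_lemma[OF H \<open>2 \<le> r\<close> lists \<open>3 \<le> k\<close>])
  fix e assume e: "e \<in> E"
  have edges: "\<And>f. f \<in> E \<Longrightarrow> f \<subseteq> V \<and> card f = r"
    using H by (auto simp: uniform_hypergraph_def)
  then have "finite e"
    using e \<open>2 \<le> r\<close> card.infinite by fastforce
  have "finite (shared_colour_pairs {f\<in>E. v \<in> f} L)" if "v \<in> e" for v
  proof -
    have "finite (\<Inter>u\<in>f. L u)" if "f \<in> {f\<in>E. v \<in> f}" for f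
      using that edges lists by blast
    then show ?thesis
      unfolding shared_colour_pairs_def using finite_edges[OF H] by (intro finite_SigmaI) auto
  qed
  moreover have "shared_colour_pairs {f\<in>E. f \<noteq> e \<and> f \<inter> e \<noteq> {}} L
      \<subseteq> (\<Union>v\<in>e. shared_colour_pairs {f\<in>E. v \<in> f} L)"
    by (auto simp: shared_colour_pairs_def)
  ultimately have "card (shared_colour_pairs {f\<in>E. f \<noteq> e \<and> f \<inter> e \<noteq> {}} L)
      \<le> card (\<Union>v\<in>e. shared_colour_pairs {f\<in>E. v \<in> f} L)"
    using \<open>finite e\<close> by (intro card_mono) auto
  also have "\<dots> \<le> (\<Sum>v\<in>e. card (shared_colour_pairs {f\<in>E. v \<in> f} L))"
    using \<open>finite e\<close> by (rule card_UN_le)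
  finally have "real (card (shared_colour_pairs {f\<in>E. f \<noteq> e \<and> f \<inter> e \<noteq> {}} L))
      \<le> (\<Sum>v\<in>e. real (card (shared_colour_pairs {f\<in>E. v \<in> f} L)))"
    by (simp flip: of_nat_sum)
  also have "\<dots> \<le> (\<Sum>v\<in>e. real k ^ r / (4 * real r))"
    using few edges[OF e] \<open>2 \<le> r\<close> by (intro sum_mono) (auto simp: field_simps)
  also have "\<dots> = real k ^ r / 4"
    using edges[OF e] \<open>2 \<le> r\<close> by simp
  finally show "real (card (shared_colour_pairs {f\<in>E. f \<noteq> e \<and> f \<inter> e \<noteq> {}} L)) \<le> real k ^ r / 4" .
qed

lemma L_colorable_unless_overloaded:
  assumes H: "uniform_hypergraph r V E" and "2 \<le> r" "3 \<le> k" "k \<le> \<sigma>"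
    and "L \<in> set_pmf (random_list_assignment V k \<sigma>)"
    and t: "real r * real (t - 1) \<le> real k ^ r / 4"
    and not_overloaded: "\<And>v. v \<in> V \<Longrightarrow> card (shared_colour_pairs {f\<in>E. v \<in> f} L) < t"
  shows "L_colorable V E L"
proof (rule L_colorable_if_few_shared_colours[OF H \<open>2 \<le> r\<close> _ \<open>3 \<le> k\<close>])
  have "finite V"
    using H by (simp add: uniform_hypergraph_def)
  then show "finite (L v) \<and> card (L v) = k" if "v \<in> V" for v
    using random_lists_in_k_subsets[of V "{1..\<sigma>}" k v L "{}"] that assms(4,5)
    by (simp add: random_list_assignment_def k_subsets_def)
  show "real r * real (card (shared_colour_pairs {f\<in>E. v \<in> f} L)) \<le> real k ^ r / 4" if "v \<in> V" for v
  proof -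
    have "card (shared_colour_pairs {f\<in>E. v \<in> f} L) \<le> t - 1"
      using not_overloaded[OF that] by simp
    then have "real r * real (card (shared_colour_pairs {f\<in>E. v \<in> f} L)) \<le> real r * real (t - 1)"
      by (intro mult_left_mono) auto
    with t show ?thesis
      by linarith
  qed
qed

lemma power_le_inverse_square:
  fixes q n :: real
  assumes "0 < q" "0 < n" "2 * ln n \<le> real t * ln (1 / q)"
  shows "q ^ t \<le> 1 / n ^ 2"
proof -
  have "q ^ t = exp (- (real t * ln (1 / q)))"
    using assms(1) by (simp add: ln_div powr_def flip: powr_realpow)
  also have "\<dots> \<le> exp (- (2 * ln n))"
    using assms(3) by simp
  also have "\<dots> = 1 / exp (ln (n ^ 2))"
    using assms(2) by (simp add: exp_minus ln_realpow inverse_eq_divide)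
  also have "\<dots> = 1 / n ^ 2"
    using assms(2) by simp
  finally show ?thesis .
qed

lemma prob_L_colorable_ge:
  assumes H: "uniform_hypergraph r V E" and lin: "linear_hypergraph E" and "2 \<le> r"
    and "card V = n" "0 < n" and "3 \<le> k" "k \<le> \<sigma>" and "0 < q" "q < 1"
    and degree: "4 * exp 1 * real r * real (max_degree V E) \<le> q * real \<sigma> ^ (r - 1)"
    and k_large: "8 * real r * ln (real n) \<le> real k ^ r * ln (1 / q)"
  shows "1 - 1 / real n \<le> measure_pmf.prob (random_list_assignment V k \<sigma>) {L. L_colorable V E L}"
proof -
  let ?M = "random_list_assignment V k \<sigma>"
  define t where "t = k ^ r div (4 * r) + 1"
  let ?overloaded = "\<lambda>v. {L. t \<le> card (shared_colour_pairs {f\<in>E. v \<in> f} L)}"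
  have "k ^ r mod (4 * r) < 4 * r"
    using \<open>2 \<le> r\<close> by simp
  then have "k ^ r \<le> 4 * r * t"
    using div_mult_mod_eq[of "k ^ r" "4 * r"] by (simp add: t_def algebra_simps)
  then have "real (k ^ r) \<le> real (4 * r * t)"
    by (simp only: of_nat_le_iff)
  then have t_ge: "real k ^ r \<le> 4 * real r * real t"
    by simp
  have "4 * r * (t - 1) \<le> k ^ r"
    using div_times_less_eq_dividend[of "k ^ r" "4 * r"] by (simp add: t_def mult.commute)
  then have "real (4 * r * (t - 1)) \<le> real (k ^ r)"
    by (simp only: of_nat_le_iff)
  then have t_le: "real r * real (t - 1) \<le> real k ^ r / 4"
    by simp
  have "measure_pmf.prob ?M (\<Union>v\<in>V. ?overloaded v) \<le> real n * q ^ t"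
    using prob_some_vertex_overloaded_le[OF H lin _ _ \<open>k \<le> \<sigma>\<close> _ t_ge degree] assms
    by (simp add: t_def)
  also have "\<dots> \<le> real n * (1 / real n ^ 2)"
  proof -
    have "2 * ln (real n) \<le> real k ^ r / (4 * real r) * ln (1 / q)"
      using k_large \<open>2 \<le> r\<close> by (simp add: field_simps)
    also have "\<dots> \<le> real t * ln (1 / q)"
      using t_ge \<open>2 \<le> r\<close> \<open>q < 1\<close> \<open>0 < q\<close> by (intro mult_right_mono) (auto simp: field_simps)
    finally have "q ^ t \<le> 1 / real n ^ 2"
      using \<open>0 < n\<close> \<open>0 < q\<close> by (intro power_le_inverse_square) auto
    then show ?thesis
      by (rule mult_left_mono) simp
  qed
  also have "\<dots> = 1 / real n"
    by (simp add: power2_eq_square)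
  finally have "1 - 1 / real n \<le> measure_pmf.prob ?M (space ?M - (\<Union>v\<in>V. ?overloaded v))"
    using measure_pmf.prob_compl[of "\<Union>v\<in>V. ?overloaded v" ?M] by simp
  also have "\<dots> \<le> measure_pmf.prob ?M {L. L_colorable V E L}"
  proof -
    have "L_colorable V E L" if "L \<in> set_pmf ?M" "L \<notin> (\<Union>v\<in>V. ?overloaded v)" for L
      using that assms t_le by (intro L_colorable_unless_overloaded[OF H]) auto
    then show ?thesis
      unfolding measure_Int_set_pmf[of ?M "space ?M - _", symmetric]
      by (intro measure_pmf.finite_measure_mono) auto
  qed
  finally show ?thesis .
qed

lemma powr_inverse_power:
  fixes x :: real
  assumes "0 < m" "0 \<le> x"
  shows "(x powr (1 / real m)) ^ m = x"
  using assms by (cases "x = 0") (simp_all add: powr_power)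

lemma prob_L_colorable_ge_of_parameters:
  assumes H: "uniform_hypergraph r V E" and lin: "linear_hypergraph E" and "2 \<le> r"
    and "card V = n" "3 \<le> n" "k \<le> \<sigma>"
    and q: "0 < q" "q < 1" "q * C ^ (r - 1) = 4 * exp 1 * real r" and "0 < C"
    and A: "3 \<le> A" "8 * real r \<le> A * ln (1 / q)"
    and k: "A * ln (real n) powr (1 / real r) \<le> real k"
    and \<sigma>: "C * real (max_degree V E) powr (1 / (real r - 1)) \<le> real \<sigma>"
  shows "1 - 1 / real n \<le> measure_pmf.prob (random_list_assignment V k \<sigma>) {L. L_colorable V E L}"
proof (rule prob_L_colorable_ge[OF H lin \<open>2 \<le> r\<close> \<open>card V = n\<close> _ _ \<open>k \<le> \<sigma>\<close> q(1,2)])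
  have "1 \<le> ln (real n)"
    using \<open>3 \<le> n\<close> exp_le by (subst ln_ge_iff) auto
  then have "1 \<le> ln (real n) powr (1 / real r)"
    by (intro ge_one_powr_ge_zero) auto
  then have "A * 1 \<le> A * ln (real n) powr (1 / real r)"
    using A(1) by (intro mult_left_mono) auto
  then show "3 \<le> k"
    using k A(1) by linarith
  have "(real (max_degree V E) powr (1 / (real r - 1))) ^ (r - 1) = real (max_degree V E)"
    using powr_inverse_power[of "r - 1" "real (max_degree V E)"] \<open>2 \<le> r\<close> by (simp add: of_nat_diff)
  moreover have "(C * real (max_degree V E) powr (1 / (real r - 1))) ^ (r - 1) \<le> real \<sigma> ^ (r - 1)"
    using \<sigma> \<open>0 < C\<close> by (intro power_mono) auto
  ultimately have "C ^ (r - 1) * real (max_degree V E) \<le> real \<sigma> ^ (r - 1)"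
    by (simp add: power_mult_distrib)
  then show "4 * exp 1 * real r * real (max_degree V E) \<le> q * real \<sigma> ^ (r - 1)"
    using q(1,3) by (metis mult_left_mono less_imp_le mult.assoc)
  have "(A * ln (real n) powr (1 / real r)) ^ r \<le> real k ^ r"
    using k A(1) by (intro power_mono) auto
  then have "A ^ r * ln (real n) \<le> real k ^ r"
    using \<open>1 \<le> ln (real n)\<close> \<open>2 \<le> r\<close> by (simp add: power_mult_distrib powr_inverse_power)
  moreover have "A * ln (real n) \<le> A ^ r * ln (real n)"
    using A(1) \<open>2 \<le> r\<close> \<open>1 \<le> ln (real n)\<close>
    by (intro mult_right_mono) (auto intro: power_increasing[of 1 r A, simplified])
  ultimately have "A * ln (real n) \<le> real k ^ r"
    by linarith
  have "8 * real r * ln (real n) \<le> A * ln (1 / q) * ln (real n)"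
    using A(2) \<open>1 \<le> ln (real n)\<close> by (intro mult_right_mono) auto
  also have "\<dots> = A * ln (real n) * ln (1 / q)"
    by (simp add: ac_simps)
  also have "\<dots> \<le> real k ^ r * ln (1 / q)"
    using \<open>A * ln (real n) \<le> real k ^ r\<close> q by (intro mult_right_mono) auto
  finally show "8 * real r * ln (real n) \<le> real k ^ r * ln (1 / q)" .
qed (use \<open>3 \<le> n\<close> in auto)

lemma threshold_power_gt:
  assumes "2 \<le> r" "(2 ^ r * exp 1 * real r) powr (1 / (real r - 1)) < C"
  shows "0 < C" "4 * exp 1 * real r < C ^ (r - 1)"
proof -
  define X where "X = 2 ^ r * exp 1 * real r"
  have "0 < X" "4 * exp 1 * real r \<le> X"
    using assms(1) power_increasing[of 2 r "2 :: real"] by (auto simp: X_def)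
  have "(X powr (1 / (real r - 1))) ^ (r - 1) = X"
    using powr_inverse_power[of "r - 1" X] \<open>0 < X\<close> assms(1) by (simp add: of_nat_diff)
  moreover have "(X powr (1 / (real r - 1))) ^ (r - 1) < C ^ (r - 1)"
    using assms by (intro power_strict_mono) (auto simp: X_def)
  ultimately have "X < C ^ (r - 1)"
    by simp
  then show "4 * exp 1 * real r < C ^ (r - 1)"
    using \<open>4 * exp 1 * real r \<le> X\<close> by linarith
  show "0 < C"
    using assms(2) by (rule le_less_trans[OF powr_ge_zero])
qed

lemma LIMSEQ_one_if_ge_one_minus_inverse:
  fixes g :: "nat \<Rightarrow> real"
  assumes "\<And>n. N \<le> n \<Longrightarrow> 1 - 1 / real n \<le> g n" "\<And>n. g n \<le> 1"
  shows "g \<longlonglongrightarrow> 1"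
proof (rule tendsto_sandwich[OF _ _ _ tendsto_const])
  show "\<forall>\<^sub>F n in sequentially. 1 - 1 / real n \<le> g n"
    using assms(1) by (auto simp: eventually_sequentially)
  show "(\<lambda>n. 1 - 1 / real n) \<longlonglongrightarrow> 1"
    using tendsto_diff[OF tendsto_const lim_1_over_n, of 1] by simp
qed (use assms(2) in simp)

theorem theorem4p1:
  fixes r :: nat and C :: real
  assumes "r \<ge> 2"
    and "C > (2 ^ r * exp 1 * real r) powr (1 / (real r - 1))"
  shows "\<exists>A::real. A > 0 \<and>
    (\<forall>(V :: nat \<Rightarrow> nat set) (E :: nat \<Rightarrow> nat set set) (k :: nat \<Rightarrow> nat) (\<sigma> :: nat \<Rightarrow> nat).
       (\<forall>n. uniform_hypergraph r (V n) (E n) \<and> linear_hypergraph (E n) \<and> card (V n) = n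
            \<and> k n \<le> \<sigma> n
            \<and> real (k n) \<ge> A * ln (real n) powr (1 / real r)
            \<and> real (\<sigma> n) \<ge> C * real (max_degree (V n) (E n)) powr (1 / (real r - 1)))
       \<longrightarrow> (\<lambda>n. measure_pmf.prob (random_list_assignment (V n) (k n) (\<sigma> n))
                 {L. L_colorable (V n) (E n) L}) \<longlonglongrightarrow> 1)"
proof -
  have "0 < C" "4 * exp 1 * real r < C ^ (r - 1)"
    using threshold_power_gt assms by auto
  define q where "q = 4 * exp 1 * real r / C ^ (r - 1)"
  have q: "0 < q" "q < 1" "q * C ^ (r - 1) = 4 * exp 1 * real r"
    using \<open>0 < C\<close> \<open>4 * exp 1 * real r < C ^ (r - 1)\<close> \<open>r \<ge> 2\<close> by (auto simp: q_def)
  define A where "A = max 3 (8 * real r / ln (1 / q))"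
  have A: "3 \<le> A" "8 * real r \<le> A * ln (1 / q)"
    using q by (auto simp: A_def field_simps max_def)
  show ?thesis
  proof (intro exI[of _ A] conjI allI impI LIMSEQ_one_if_ge_one_minus_inverse[where N = 3])
    fix V E k \<sigma> and n :: nat assume "\<forall>n. uniform_hypergraph r (V n) (E n) \<and> linear_hypergraph (E n)
        \<and> card (V n) = n \<and> k n \<le> \<sigma> n \<and> real (k n) \<ge> A * ln (real n) powr (1 / real r)
        \<and> real (\<sigma> n) \<ge> C * real (max_degree (V n) (E n)) powr (1 / (real r - 1))" "3 \<le> n"
    then show "1 - 1 / real n \<le> measure_pmf.prob (random_list_assignment (V n) (k n) (\<sigma> n))
        {L. L_colorable (V n) (E n) L}"
      using prob_L_colorable_ge_of_parameters[OF _ _ \<open>r \<ge> 2\<close> _ _ _ q \<open>0 < C\<close> A] by blast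
  qed (use A in \<open>auto simp: measure_pmf.prob_le_1\<close>)
qed

end
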